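(* Let $G=(V,E)$ be a simple directed graph and $f\ge 0$ an integer. Then: (a) $G$ satisfies Condition CCS if and only if $G$ satisfies the 1-reach condition; (b) $G$ satisfies Condition CCA if and only if $G$ satisfies the 2-reach condition; (c) $G$ satisfies Condition BCS if and only if $G$ satisfies the 3-reach condition.
   Context: For $Y\subseteq V$, $G_Y$ is the subgraph induced by $Y$ and $\overline{X}=V\setminus X$. For node $v$ and $F\subseteq V\setminus\{v\}$, $reach_v(F)=\{u\in\overline{F}: u\text{ has a directed path to }v\text{ in }G_{\overline{F}}\}$. For disjoint non-empty $A,B\subseteq V$, a node $w\notin B$ is an incoming neighbor of $B$ if $(w,b)\in E$ for some $b\in B$; write $A\Rightarrow_x B$ if $A$ contains at least $x$ distinct incoming neighbors of $B$, and $A\not\Rightarrow_x B$ for its negation. Condition CCS: for any partition $F,L,C,R$ of $V$ with $L,R$ non-empty and $|F|\le f$, $L\cup C\Rightarrow_1 R$ or $R\cup C\Rightarrow_1 L$. Condition CCA: for any partition $L,C,R$ of $V$ with $L,R$ non-empty, $L\cup C\Rightarrow_{f+1} R$ or $R\cup C\Rightarrow_{f+1} L$. Condition BCS: for any partition $F,L,C,R$ of $V$ with $L,R$ non-empty and $|F|\le f$, $L\cup C\Rightarrow_{f+1} R$ or $R\cup C\Rightarrow_{f+1} L$. 1-reach: for any $F\subset V$ with $|F|\le f$ and any $u,v\in\overline{F}$, $reach_u(F)\cap reach_v(F)\neq\emptyset$. 2-reach: for any $u,v\in V$ and any $F_u,F_v\subseteq V$ with $|F_u|,|F_v|\le f$,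 $u\notin F_u$, $v\notin F_v$, $reach_v(F_v)\cap reach_u(F_u)\neq\emptyset$. 3-reach: for any $u,v\in V$ and any $F,F_u,F_v\subseteq V$ with $|F|,|F_u|,|F_v|\le f$, $u\notin F\cup F_u$, $v\notin F\cup F_v$, $reach_v(F\cup F_v)\cap reach_u(F\cup F_u)\neq\emptyset$. *)

theory Defs
  imports Main
begin

definition simple_digraph :: "'a set \<Rightarrow> ('a \<times> 'a) set \<Rightarrow> bool" where
  "simple_digraph V E \<longleftrightarrow> finite V \<and> E \<subseteq> V \<times> V \<and> (\<forall>v. (v, v) \<notin> E)"

definition induced_edges :: "('a \<times> 'a) set \<Rightarrow> 'a set \<Rightarrow> ('a \<times> 'a) set" where
  "induced_edges E Y = E \<inter> (Y \<times> Y)"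

definition reach :: "'a set \<Rightarrow> ('a \<times> 'a) set \<Rightarrow> 'a set \<Rightarrow> 'a \<Rightarrow> 'a set" where
  "reach V E F v = {u \<in> V - F. (u, v) \<in> (induced_edges E (V - F))\<^sup>*}"

definition in_nbrs :: "('a \<times> 'a) set \<Rightarrow> 'a set \<Rightarrow> 'a set" where
  "in_nbrs E B = {w. w \<notin> B \<and> (\<exists>b\<in>B. (w, b) \<in> E)}"

definition arrow :: "('a \<times> 'a) set \<Rightarrow> 'a set \<Rightarrow> nat \<Rightarrow> 'a set \<Rightarrow> bool" where
  "arrow E A x B \<longleftrightarrow> x \<le> card (A \<inter> in_nbrs E B)"

definition partition3 :: "'a set \<Rightarrow> 'a set \<Rightarrow> 'a set \<Rightarrow> 'a set \<Rightarrow> bool" where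
  "partition3 V L C R \<longleftrightarrow> L \<union> C \<union> R = V \<and> L \<inter> C = {} \<and> L \<inter> R = {} \<and> C \<inter> R = {}"

definition partition4 :: "'a set \<Rightarrow> 'a set \<Rightarrow> 'a set \<Rightarrow> 'a set \<Rightarrow> 'a set \<Rightarrow> bool" where
  "partition4 V F L C R \<longleftrightarrow> F \<union> L \<union> C \<union> R = V \<and> F \<inter> L = {} \<and> F \<inter> C = {} \<and>
     F \<inter> R = {} \<and> L \<inter> C = {} \<and> L \<inter> R = {} \<and> C \<inter> R = {}"

definition CCS :: "'a set \<Rightarrow> ('a \<times> 'a) set \<Rightarrow> nat \<Rightarrow> bool" where
  "CCS V E f \<longleftrightarrow> (\<forall>F L C R. partition4 V F L C R \<and> L \<noteq> {} \<and> R \<noteq> {} \<and> card F \<le> f \<longrightarrow>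
      arrow E (L \<union> C) 1 R \<or> arrow E (R \<union> C) 1 L)"

definition CCA :: "'a set \<Rightarrow> ('a \<times> 'a) set \<Rightarrow> nat \<Rightarrow> bool" where
  "CCA V E f \<longleftrightarrow> (\<forall>L C R. partition3 V L C R \<and> L \<noteq> {} \<and> R \<noteq> {} \<longrightarrow>
      arrow E (L \<union> C) (f + 1) R \<or> arrow E (R \<union> C) (f + 1) L)"

definition BCS :: "'a set \<Rightarrow> ('a \<times> 'a) set \<Rightarrow> nat \<Rightarrow> bool" where
  "BCS V E f \<longleftrightarrow> (\<forall>F L C R. partition4 V F L C R \<and> L \<noteq> {} \<and> R \<noteq> {} \<and> card F \<le> f \<longrightarrow>
      arrow E (L \<union> C) (f + 1) R \<or> arrow E (R \<union> C) (f + 1) L)"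

definition reach1 :: "'a set \<Rightarrow> ('a \<times> 'a) set \<Rightarrow> nat \<Rightarrow> bool" where
  "reach1 V E f \<longleftrightarrow> (\<forall>F u v. F \<subset> V \<and> card F \<le> f \<and> u \<in> V - F \<and> v \<in> V - F \<longrightarrow>
      reach V E F u \<inter> reach V E F v \<noteq> {})"

definition reach2 :: "'a set \<Rightarrow> ('a \<times> 'a) set \<Rightarrow> nat \<Rightarrow> bool" where
  "reach2 V E f \<longleftrightarrow> (\<forall>u v Fu Fv. u \<in> V \<and> v \<in> V \<and> Fu \<subseteq> V \<and> Fv \<subseteq> V \<and>
      card Fu \<le> f \<and> card Fv \<le> f \<and> u \<notin> Fu \<and> v \<notin> Fv \<longrightarrow>
      reach V E Fv v \<inter> reach V E Fu u \<noteq> {})"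

definition reach3 :: "'a set \<Rightarrow> ('a \<times> 'a) set \<Rightarrow> nat \<Rightarrow> bool" where
  "reach3 V E f \<longleftrightarrow> (\<forall>u v F Fu Fv. u \<in> V \<and> v \<in> V \<and> F \<subseteq> V \<and> Fu \<subseteq> V \<and> Fv \<subseteq> V \<and>
      card F \<le> f \<and> card Fu \<le> f \<and> card Fv \<le> f \<and> u \<notin> F \<union> Fu \<and> v \<notin> F \<union> Fv \<longrightarrow>
      reach V E (F \<union> Fv) v \<inter> reach V E (F \<union> Fu) u \<noteq> {})"

end

theory Submission
  imports Defs
begin

text \<open>All three equivalences are instances of one statement with two parameters: removing a
  common set F of at most a nodes, every cut should have at least k+1 incoming neighbours on
  one side, versus: for additional individual sets Fu, Fv of at most k nodes the reach sets
  of u and v meet (CCS: a = f, k = 0; CCA: a = 0, k = f; BCS: a = k = f).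
  Since reach_v(F) is the least set containing v that is closed under incoming edges from
  outside F, disjoint reach sets form the two sides of a cut whose incoming neighbours on
  either side lie in Fu resp. Fv; conversely, for a cut violating the condition, taking Fu
  and Fv to be the incoming neighbours of the two sides confines each reach set to its
  own side.\<close>

definition cut_condition :: "'a set \<Rightarrow> ('a \<times> 'a) set \<Rightarrow> nat \<Rightarrow> nat \<Rightarrow> bool" where
  "cut_condition V E a k \<longleftrightarrow> (\<forall>F L C R. partition4 V F L C R \<and> L \<noteq> {} \<and> R \<noteq> {} \<and> card F \<le> a \<longrightarrow>
      arrow E (L \<union> C) (k + 1) R \<or> arrow E (R \<union> C) (k + 1) L)"

definition reach_condition :: "'a set \<Rightarrow> ('a \<times> 'a) set \<Rightarrow> nat \<Rightarrow> nat \<Rightarrow> bool" where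
  "reach_condition V E a k \<longleftrightarrow> (\<forall>u v F Fu Fv. u \<in> V \<and> v \<in> V \<and> F \<subseteq> V \<and> Fu \<subseteq> V \<and> Fv \<subseteq> V \<and>
      card F \<le> a \<and> card Fu \<le> k \<and> card Fv \<le> k \<and> u \<notin> F \<union> Fu \<and> v \<notin> F \<union> Fv \<longrightarrow>
      reach V E (F \<union> Fv) v \<inter> reach V E (F \<union> Fu) u \<noteq> {})"

lemma reach_subset_Diff: "reach V E F v \<subseteq> V - F"
  by (auto simp: reach_def)

lemma self_in_reach: "v \<in> V - F \<Longrightarrow> v \<in> reach V E F v"
  by (auto simp: reach_def)

lemma reach_subset_if_in_nbrs_subset:
  assumes "v \<in> X" and "in_nbrs E X \<inter> V \<subseteq> F"
  shows "reach V E F v \<subseteq> X"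
proof
  fix u assume "u \<in> reach V E F v"
  hence "(u, v) \<in> (induced_edges E (V - F))\<^sup>*" by (simp add: reach_def)
  thus "u \<in> X"
  proof (induction rule: converse_rtrancl_induct)
    case base
    show ?case using assms(1) .
  next
    case (step y z)
    hence "y \<in> V - F" "(y, z) \<in> E" by (auto simp: induced_edges_def)
    with step.IH assms(2) show ?case by (auto simp: in_nbrs_def)
  qed
qed

lemma in_nbrs_reach_subset:
  assumes "E \<subseteq> V \<times> V"
  shows "in_nbrs E (reach V E F v) \<subseteq> F"
proof
  fix w assume "w \<in> in_nbrs E (reach V E F v)"
  then obtain r where r: "r \<in> reach V E F v" "(w, r) \<in> E" and w: "w \<notin> reach V E F v"
    by (auto simp: in_nbrs_def)
  show "w \<in> F"
  proof (rule ccontr)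
    assume "w \<notin> F"
    with r assms have "(w, r) \<in> induced_edges E (V - F)"
      using reach_subset_Diff by (fastforce simp: induced_edges_def)
    moreover have "(r, v) \<in> (induced_edges E (V - F))\<^sup>*" using r by (simp add: reach_def)
    ultimately have "(w, v) \<in> (induced_edges E (V - F))\<^sup>*"
      by (rule converse_rtrancl_into_rtrancl)
    with \<open>w \<notin> F\<close> r(2) assms have "w \<in> reach V E F v" by (auto simp: reach_def)
    with w show False ..
  qed
qed

lemma card_in_nbrs_reach_le:
  assumes "E \<subseteq> V \<times> V" and "finite G" and "A \<inter> F = {}"
  shows "card (A \<inter> in_nbrs E (reach V E (F \<union> G) v)) \<le> card G"
proof (rule card_mono[OF \<open>finite G\<close>])
  show "A \<inter> in_nbrs E (reach V E (F \<union> G) v) \<subseteq> G"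
    using in_nbrs_reach_subset[OF assms(1), of "F \<union> G" v] assms(3) by blast
qed

lemma partition4_swap: "partition4 V F L C R \<Longrightarrow> partition4 V F R C L"
  by (auto simp: partition4_def)

lemma reach_subset_side:
  assumes "partition4 V F L C R" and "v \<in> R"
  shows "reach V E (F \<union> (L \<union> C) \<inter> in_nbrs E R) v \<subseteq> R"
proof (rule reach_subset_if_in_nbrs_subset[OF \<open>v \<in> R\<close>])
  show "in_nbrs E R \<inter> V \<subseteq> F \<union> (L \<union> C) \<inter> in_nbrs E R"
    using assms(1) by (auto simp: partition4_def in_nbrs_def)
qed

lemma cut_condition_imp_reach_condition:
  assumes "finite V" and "E \<subseteq> V \<times> V" and cut: "cut_condition V E a k"
  shows "reach_condition V E a k"
  unfolding reach_condition_def
proof (intro allI impI notI)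
  fix u v F Fu Fv
  assume h: "u \<in> V \<and> v \<in> V \<and> F \<subseteq> V \<and> Fu \<subseteq> V \<and> Fv \<subseteq> V \<and> card F \<le> a \<and>
      card Fu \<le> k \<and> card Fv \<le> k \<and> u \<notin> F \<union> Fu \<and> v \<notin> F \<union> Fv"
    and disj: "reach V E (F \<union> Fv) v \<inter> reach V E (F \<union> Fu) u = {}"
  define L where "L = reach V E (F \<union> Fu) u"
  define R where "R = reach V E (F \<union> Fv) v"
  define C where "C = V - F - L - R"
  have "L \<subseteq> V - (F \<union> Fu)" "R \<subseteq> V - (F \<union> Fv)"
    unfolding L_def R_def by (rule reach_subset_Diff)+
  with disj h have "partition4 V F L C R"
    unfolding partition4_def L_def R_def C_def by auto
  moreover have "L \<noteq> {}" "R \<noteq> {}"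
    using h self_in_reach[of u V "F \<union> Fu" E] self_in_reach[of v V "F \<union> Fv" E]
    by (auto simp: L_def R_def)
  ultimately have "arrow E (L \<union> C) (k + 1) R \<or> arrow E (R \<union> C) (k + 1) L"
    using cut h unfolding cut_condition_def by blast
  moreover have "card ((L \<union> C) \<inter> in_nbrs E R) \<le> card Fv" "card ((R \<union> C) \<inter> in_nbrs E L) \<le> card Fu"
  proof -
    have "finite Fu" "finite Fv"
      using h assms(1) finite_subset by auto
    moreover have "(L \<union> C) \<inter> F = {}" "(R \<union> C) \<inter> F = {}"
      using \<open>L \<subseteq> _\<close> \<open>R \<subseteq> _\<close> by (auto simp: C_def)
    ultimately show "card ((L \<union> C) \<inter> in_nbrs E R) \<le> card Fv" "card ((R \<union> C) \<inter> in_nbrs E L) \<le> card Fu"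
      using card_in_nbrs_reach_le[OF assms(2), of Fv "L \<union> C" F v, folded R_def]
        card_in_nbrs_reach_le[OF assms(2), of Fu "R \<union> C" F u, folded L_def] by blast+
  qed
  ultimately show False
    using h by (auto simp: arrow_def)
qed

lemma reach_condition_imp_cut_condition:
  assumes reach: "reach_condition V E a k"
  shows "cut_condition V E a k"
  unfolding cut_condition_def
proof (intro allI impI)
  fix F L C R
  assume h: "partition4 V F L C R \<and> L \<noteq> {} \<and> R \<noteq> {} \<and> card F \<le> a"
  show "arrow E (L \<union> C) (k + 1) R \<or> arrow E (R \<union> C) (k + 1) L"
  proof (rule ccontr)
    assume "\<not> ?thesis"
    then have small: "card ((L \<union> C) \<inter> in_nbrs E R) \<le> k" "card ((R \<union> C) \<inter> in_nbrs E L) \<le> k"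
      by (auto simp: arrow_def)
    obtain u v where "u \<in> L" "v \<in> R" using h by auto
    define Fu where "Fu = (R \<union> C) \<inter> in_nbrs E L"
    define Fv where "Fv = (L \<union> C) \<inter> in_nbrs E R"
    have "reach V E (F \<union> Fv) v \<subseteq> R" "reach V E (F \<union> Fu) u \<subseteq> L"
      unfolding Fu_def Fv_def
      using reach_subset_side[of V F L C R v E] reach_subset_side[of V F R C L u E]
        partition4_swap h \<open>u \<in> L\<close> \<open>v \<in> R\<close> by blast+
    moreover have "reach V E (F \<union> Fv) v \<inter> reach V E (F \<union> Fu) u \<noteq> {}"
    proof -
      have "u \<in> V" "v \<in> V" "F \<subseteq> V" "Fu \<subseteq> V" "Fv \<subseteq> V" "u \<notin> F \<union> Fu" "v \<notin> F \<union> Fv"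
        using h \<open>u \<in> L\<close> \<open>v \<in> R\<close> by (auto simp: partition4_def in_nbrs_def Fu_def Fv_def)
      then show ?thesis
        using reach h small unfolding reach_condition_def Fu_def Fv_def by blast
    qed
    ultimately show False
      using h by (auto simp: partition4_def)
  qed
qed

lemma CCS_iff_cut_condition: "CCS V E f \<longleftrightarrow> cut_condition V E f 0"
  by (simp add: CCS_def cut_condition_def)

lemma BCS_iff_cut_condition: "BCS V E f \<longleftrightarrow> cut_condition V E f f"
  by (simp add: BCS_def cut_condition_def)

lemma card_le_0_iff_empty: "finite V \<Longrightarrow> G \<subseteq> V \<Longrightarrow> card G \<le> 0 \<longleftrightarrow> G = {}"
  using finite_subset by fastforce

lemma CCA_iff_cut_condition:
  assumes "finite V"
  shows "CCA V E f \<longleftrightarrow> cut_condition V E 0 f"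
proof -
  have "partition4 V F L C R \<and> card F \<le> 0 \<longleftrightarrow> F = {} \<and> partition3 V L C R" for F L C R :: "'a set"
    using card_le_0_iff_empty[OF assms, of F]
    by (auto simp: partition3_def partition4_def)
  then show ?thesis
    unfolding CCA_def cut_condition_def by blast
qed

lemma reach1_iff_reach_condition:
  assumes "finite V"
  shows "reach1 V E f \<longleftrightarrow> reach_condition V E f 0"
  using card_le_0_iff_empty[OF assms] unfolding reach1_def reach_condition_def
  by (intro iffI)
    (metis DiffI antisym_conv2 sup_bot_right, metis DiffD1 DiffD2 bot.extremum nless_le sup.order_iff)

lemma reach2_iff_reach_condition:
  assumes "finite V"
  shows "reach2 V E f \<longleftrightarrow> reach_condition V E 0 f"
  using card_le_0_iff_empty[OF assms] unfolding reach2_def reach_condition_def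
  by (intro iffI) (metis Un_commute sup_bot_right, metis Un_empty_left empty_subsetI)

lemma reach3_iff_reach_condition: "reach3 V E f \<longleftrightarrow> reach_condition V E f f"
  by (simp add: reach3_def reach_condition_def)

theorem theoremA8:
  fixes V :: "'a set" and E :: "('a \<times> 'a) set" and f :: nat
  assumes "simple_digraph V E"
  shows "(CCS V E f \<longleftrightarrow> reach1 V E f) \<and> (CCA V E f \<longleftrightarrow> reach2 V E f) \<and>
         (BCS V E f \<longleftrightarrow> reach3 V E f)"
proof -
  have fin: "finite V" and EV: "E \<subseteq> V \<times> V"
    using assms by (auto simp: simple_digraph_def)
  have equiv: "cut_condition V E a k \<longleftrightarrow> reach_condition V E a k" for a k
    using cut_condition_imp_reach_condition[OF fin EV] reach_condition_imp_cut_condition by blast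
  show ?thesis
    using equiv CCS_iff_cut_condition BCS_iff_cut_condition CCA_iff_cut_condition[OF fin]
      reach1_iff_reach_condition[OF fin] reach2_iff_reach_condition[OF fin] reach3_iff_reach_condition
    by blast
qed

end
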